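(* Let $H$ be a real symmetric $n\times n$ matrix and $t_0\in\mathbb{R}$ such that $|\langle 1|e^{it_0H}|2\rangle|=1$. Then there exist $\theta\in\mathbb{R}$, integers $0\le \ell\le m\le n$, a real orthogonal matrix $\tilde Q$, and a real diagonal matrix \[ \tilde D=\pi\,\mathrm{diag}(r_1,\dots,r_\ell,r_{\ell+1},\dots,r_m,r_{m+1},\dots,r_n) \] with $r_1\ge\cdots\ge r_\ell$ positive even integers, $r_{\ell+1}\ge\cdots\ge r_m$ positive odd integers (and $r_{m+1},\dots,r_n$ real), such that $t_0H=\tilde Q^T\tilde D\tilde Q+\theta I$, and such that the first two rows of $\tilde Q^T$ have the form $(x_1,\dots,x_m,0,\dots,0)$ and $(x_1,\dots,x_\ell,-x_{\ell+1},\dots,-x_m,0,\dots,0)$ respectively, with $x_1,\dots,x_m\ge 0$.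
   Context: $\langle 1|M|2\rangle$ denotes the $(1,2)$ entry of a matrix $M$. *)

theory Defs
  imports Complex_Main "Jordan_Normal_Form.Matrix"
begin

definition mat_exp :: "complex mat \<Rightarrow> complex mat" where
  "mat_exp A = mat (dim_row A) (dim_col A) (\<lambda>(i,j). \<Sum>k. (A ^\<^sub>m k) $$ (i,j) / of_nat (fact k))"

end

theory Submission
  imports Defs "Jordan_Normal_Form.Char_Poly"
begin

text \<open>
  Diagonalise t0 H = Q0^T diag(\<mu>) Q0 by the spectral theorem. The entry (1,2) of
  exp(i t0 H) is then the sum over j of a_j b_j exp(i \<mu>_j), where a and b are the first
  two columns of Q0, both unit vectors. If this sum has modulus 1 and phase \<theta>, then
  the sum of a_j b_j cos(\<mu>_j - \<theta>) equals 1, which is the sum of (a_j^2 + b_j^2)/2; as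
  every summand of the difference is nonnegative, a_j^2 + b_j^2 = 2 a_j b_j cos(\<mu>_j - \<theta>)
  for each j. So either a_j = b_j = 0, or a_j = b_j \<noteq> 0 and \<mu>_j - \<theta> is an even
  multiple of \<pi>, or a_j = -b_j \<noteq> 0 and \<mu>_j - \<theta> is an odd multiple of \<pi>. Lowering \<theta>
  by a multiple of 2\<pi> makes all these multiples positive; listing the eigenvectors of
  the second kind, then of the third kind, then the rest, each block by decreasing
  eigenvalue, and flipping signs so that a_j \<ge> 0 gives the required Q.
\<close>

section \<open>Orthogonal matrices\<close>

lemma index_mult_mat_lessThan:
  assumes "A \<in> carrier_mat nr k" "B \<in> carrier_mat k nc" "i < nr" "j < nc"
  shows "(A * B) $$ (i,j) = (\<Sum>c<k. A $$ (i,c) * B $$ (c,j))"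
  using assms by (simp add: scalar_prod_def atLeast0LessThan)

lemma index_transpose_mult_mat:
  assumes "A \<in> carrier_mat n m" "B \<in> carrier_mat n m'" "a < m" "b < m'"
  shows "(transpose_mat A * B) $$ (a,b) = (\<Sum>j<n. A $$ (j,a) * B $$ (j,b))"
  using assms by (subst index_mult_mat_lessThan[of _ m n _ m']) auto

lemma index_mult_transpose_mat:
  assumes "A \<in> carrier_mat m n" "B \<in> carrier_mat m' n" "a < m" "b < m'"
  shows "(A * transpose_mat B) $$ (a,b) = (\<Sum>j<n. A $$ (a,j) * B $$ (b,j))"
  using assms by (subst index_mult_mat_lessThan[of _ m n _ m']) auto

lemma index_transpose_diag_mult_mat:
  assumes Q: "Q \<in> carrier_mat n m" and "a < m" "b < m"
  shows "(transpose_mat Q * mat_diag n f * Q) $$ (a,b) = (\<Sum>j<n. Q $$ (j,a) * f j * Q $$ (j,b))"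
proof -
  have "transpose_mat Q * mat_diag n f = mat m n (\<lambda>(i,j). Q $$ (j,i) * f j)"
    using Q by (subst mat_diag_mult_right[of _ m]) auto
  then show ?thesis
    using assms by (subst index_mult_mat_lessThan[of _ m n _ m]) auto
qed

lemma symmetric_mat_index:
  assumes "A \<in> carrier_mat n n" "transpose_mat A = A" "i < n" "j < n"
  shows "A $$ (j,i) = A $$ (i,j)"
  using assms by (metis carrier_matD index_transpose_mat(1))

text \<open>Unlike \<open>orthogonal_mat\<close> of the matrix library, which only asks for pairwise
  orthogonal nonzero columns, this is the usual notion Q^T Q = Q Q^T = 1.\<close>

definition orth_mat :: "nat \<Rightarrow> 'a :: comm_ring_1 mat \<Rightarrow> bool" where
  "orth_mat n Q \<longleftrightarrow>
     Q \<in> carrier_mat n n \<and> transpose_mat Q * Q = 1\<^sub>m n \<and> Q * transpose_mat Q = 1\<^sub>m n"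

lemma orth_mat_carrier: "orth_mat n Q \<Longrightarrow> Q \<in> carrier_mat n n"
  unfolding orth_mat_def by simp

lemma orth_mat_mult:
  assumes "orth_mat n A" "orth_mat n B"
  shows "orth_mat n (A * B)"
proof -
  have A: "A \<in> carrier_mat n n" "transpose_mat A * A = 1\<^sub>m n" "A * transpose_mat A = 1\<^sub>m n"
   and B: "B \<in> carrier_mat n n" "transpose_mat B * B = 1\<^sub>m n" "B * transpose_mat B = 1\<^sub>m n"
    using assms unfolding orth_mat_def by auto
  have tA: "transpose_mat A \<in> carrier_mat n n" and tB: "transpose_mat B \<in> carrier_mat n n"
    using A B by auto
  have "transpose_mat (A * B) * (A * B) = transpose_mat B * ((transpose_mat A * A) * B)"
    using A(1) B(1) tA tB by (simp add: transpose_mult assoc_mult_mat[of _ n n _ n _ n])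
  also have "\<dots> = 1\<^sub>m n"
    unfolding A(2) using B by simp
  finally have left: "transpose_mat (A * B) * (A * B) = 1\<^sub>m n" .
  have "(A * B) * transpose_mat (A * B) = A * ((B * transpose_mat B) * transpose_mat A)"
    using A(1) B(1) tA tB by (simp add: transpose_mult assoc_mult_mat[of _ n n _ n _ n])
  also have "\<dots> = 1\<^sub>m n"
    unfolding B(3) using A by simp
  finally show ?thesis
    using A B left unfolding orth_mat_def by simp
qed

lemma orth_mat_col_sum_sq:
  fixes Q :: "real mat"
  assumes "orth_mat n Q" "c < n"
  shows "(\<Sum>j<n. (Q $$ (j,c))\<^sup>2) = 1"
  using assms index_transpose_mult_mat[of Q n n Q n c c]
  unfolding orth_mat_def by (simp add: power2_eq_square)

lemma transpose_four_block_diag: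
  assumes "C \<in> carrier_mat m m" "R \<in> carrier_mat n n"
  shows "transpose_mat (four_block_mat C (0\<^sub>m m n) (0\<^sub>m n m) R)
    = four_block_mat (transpose_mat C) (0\<^sub>m m n) (0\<^sub>m n m) (transpose_mat R)"
  using assms by (simp add: transpose_four_block_mat[of _ m m _ n _ n])

lemma mult_four_block_diag:
  fixes C D R S :: "'a :: semiring_0 mat"
  assumes "C \<in> carrier_mat m m" "D \<in> carrier_mat m m" "R \<in> carrier_mat n n" "S \<in> carrier_mat n n"
  shows "four_block_mat C (0\<^sub>m m n) (0\<^sub>m n m) R * four_block_mat D (0\<^sub>m m n) (0\<^sub>m n m) S
    = four_block_mat (C * D) (0\<^sub>m m n) (0\<^sub>m n m) (R * S)"
  using assms by (simp add: mult_four_block_mat[of _ m m _ n _ n _ _ m _ n])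

lemma orth_mat_four_block_diag:
  assumes "orth_mat m C" "orth_mat n R"
  shows "orth_mat (m + n) (four_block_mat C (0\<^sub>m m n) (0\<^sub>m n m) R)"
  using assms unfolding orth_mat_def
  by (simp add: transpose_four_block_diag mult_four_block_diag)

lemma orth_mat_householder:
  fixes w :: "nat \<Rightarrow> 'a :: field"
  assumes c: "c * (\<Sum>k<N. w k * w k) = 2"
  shows "orth_mat N (mat N N (\<lambda>(i,j). (if i = j then 1 else 0) - c * w i * w j))"
    (is "orth_mat N ?P")
proof -
  have P: "?P \<in> carrier_mat N N" by simp
  have sym: "transpose_mat ?P = ?P"
    by (rule eq_matI) (auto simp: mult.commute mult.left_commute)
  have "?P * ?P = 1\<^sub>m N"
  proof (rule eq_matI)
    fix i j assume "i < dim_row (1\<^sub>m N)" "j < dim_col (1\<^sub>m N)"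
    then have i: "i < N" and j: "j < N" by auto
    have "(?P * ?P) $$ (i,j) = (\<Sum>k<N. ((if i = k then 1 else 0) - c * w i * w k) * ((if k = j then 1 else 0) - c * w k * w j))"
      using i j by (subst index_mult_mat_lessThan[OF P P i j]) simp
    also have "\<dots> = (\<Sum>k<N. (if k = i then (if k = j then 1 else 0) else 0) - (if k = i then c * w k * w j else 0)
        - (if k = j then c * w i * w k else 0) + c * w i * w j * (c * (w k * w k)))"
      by (intro sum.cong refl) (auto simp: algebra_simps)
    also have "\<dots> = (\<Sum>k<N. (if k = i then (if k = j then 1 else 0) else 0)) - (\<Sum>k<N. if k = i then c * w k * w j else 0)
        - (\<Sum>k<N. if k = j then c * w i * w k else 0) + c * w i * w j * (c * (\<Sum>k<N. w k * w k))"
      by (simp only: sum.distrib sum_subtractf sum_distrib_left)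
    also have "\<dots> = 1\<^sub>m N $$ (i,j)"
      using i j unfolding c by simp
    finally show "(?P * ?P) $$ (i,j) = 1\<^sub>m N $$ (i,j)" .
  qed simp_all
  then show ?thesis
    unfolding orth_mat_def sym by simp
qed

lemma exists_orth_mat_first_row:
  fixes f :: "nat \<Rightarrow> real"
  assumes N: "0 < N" and f: "(\<Sum>k<N. f k * f k) = 1"
  shows "\<exists>P. orth_mat N P \<and> (\<forall>j<N. P $$ (0,j) = f j)"
proof (cases "f 0 = 1")
  case True
  have "(\<Sum>k\<in>{..<N}-{0}. f k * f k) = 0"
    using f True N by (simp add: sum.remove[of "{..<N}" 0])
  then have "f k = 0" if "k < N" "k \<noteq> 0" for k
    using that by (subst (asm) sum_nonneg_eq_0_iff) auto
  then show ?thesis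
    using True by (intro exI[of _ "1\<^sub>m N"]) (auto simp: orth_mat_def)
next
  case False
  \<comment> \<open>the Householder reflection exchanging e_0 and f\<close>
  define w where "w k = f k - (if k = 0 then 1 else 0)" for k
  define c where "c = 1 / (1 - f 0)"
  have "(\<Sum>k<N. w k * w k) = (\<Sum>k<N. f k * f k) - (\<Sum>k<N. if k = 0 then 2 * f k - 1 else 0)"
    unfolding w_def sum_subtractf[symmetric] by (intro sum.cong refl) (auto simp: algebra_simps)
  also have "\<dots> = 2 * (1 - f 0)"
    using f N by simp
  finally have "c * (\<Sum>k<N. w k * w k) = 2"
    using False unfolding c_def by (simp add: field_simps)
  moreover have "(if 0 = j then 1 else 0) - c * w 0 * w j = f j" for j
    using False unfolding c_def w_def by (auto simp: field_simps)
  ultimately show ?thesis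
    using N by (intro exI[of _ "mat N N (\<lambda>(i,j). (if i = j then 1 else 0) - c * w i * w j)"])
      (simp add: orth_mat_householder)
qed

section \<open>Spectral theorem for real symmetric matrices\<close>

lemma conjugate_real_mat_mult_vec:
  fixes A :: "real mat"
  assumes "A \<in> carrier_mat nr nc" "u \<in> carrier_vec nc"
  shows "conjugate (map_mat complex_of_real A *\<^sub>v u) = map_mat complex_of_real A *\<^sub>v conjugate u"
proof (rule eq_vecI)
  fix i assume "i < dim_vec (map_mat complex_of_real A *\<^sub>v conjugate u)"
  then have i: "i < nr" using assms by simp
  let ?r = "row (map_mat complex_of_real A) i"
  have "conjugate ?r = ?r"
    using assms i by (intro eq_vecI) auto
  moreover have "conjugate (?r \<bullet> u) = conjugate ?r \<bullet> conjugate u"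
    using assms i by (intro conjugate_sprod_vec[of _ nc]) auto
  ultimately show "conjugate (map_mat complex_of_real A *\<^sub>v u) $ i = (map_mat complex_of_real A *\<^sub>v conjugate u) $ i"
    using assms i by simp
qed (use assms in simp)

lemma real_symmetric_eigenvalue_real:
  fixes A :: "real mat"
  assumes A: "A \<in> carrier_mat n n" "transpose_mat A = A"
    and z: "eigenvalue (map_mat complex_of_real A) z"
  shows "z \<in> \<real>"
proof -
  let ?C = "map_mat complex_of_real A"
  have C: "?C \<in> carrier_mat n n" "transpose_mat ?C = ?C"
    using A by (auto simp: map_mat_transpose)
  obtain u where u: "u \<in> carrier_vec n" "u \<noteq> 0\<^sub>v n" "?C *\<^sub>v u = z \<cdot>\<^sub>v u"
    using z C unfolding eigenvalue_def eigenvector_def by auto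
  have "z * (u \<bullet>c u) = (?C *\<^sub>v u) \<bullet>c u"
    using u by simp
  also have "\<dots> = u \<bullet> (?C *\<^sub>v conjugate u)"
    using transpose_vec_mult_scalar[OF C(1), of "conjugate u" u] u C by simp
  also have "\<dots> = cnj z * (u \<bullet>c u)"
    using u A by (simp flip: conjugate_real_mat_mult_vec add: conjugate_smult_vec)
  finally have "z = cnj z"
    using u conjugate_square_greater_0_vec[of u n] by simp
  then show ?thesis
    by (metis Reals_cnj_iff)
qed

lemma real_symmetric_unit_eigenvector:
  fixes A :: "real mat"
  assumes A: "A \<in> carrier_mat (Suc n) (Suc n)" "transpose_mat A = A"
  shows "\<exists>e v. v \<in> carrier_vec (Suc n) \<and> A *\<^sub>v v = e \<cdot>\<^sub>v v \<and> v \<bullet> v = 1"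
proof -
  let ?C = "map_mat complex_of_real A"
  have C: "?C \<in> carrier_mat (Suc n) (Suc n)" using A by simp
  have "degree (char_poly ?C) = Suc n"
    using degree_monic_char_poly[OF C] by simp
  then obtain z where "poly (char_poly ?C) z = 0"
    using fundamental_theorem_of_algebra constant_degree by (metis nat.distinct(1))
  then have "eigenvalue ?C z"
    using eigenvalue_root_char_poly[OF C] by simp
  then have "z = of_real (Re z)"
    using real_symmetric_eigenvalue_real[OF A] by (metis of_real_Re)
  with \<open>poly (char_poly ?C) z = 0\<close> have "poly (char_poly A) (Re z) = 0"
    by (metis of_real_eq_0_iff of_real_hom.char_poly_hom[OF A(1)] of_real_hom.poly_map_poly)
  then obtain w where w: "w \<in> carrier_vec (Suc n)" "w \<noteq> 0\<^sub>v (Suc n)" "A *\<^sub>v w = Re z \<cdot>\<^sub>v w"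
    using eigenvalue_root_char_poly[OF A(1)] A unfolding eigenvalue_def eigenvector_def by auto
  have "w \<bullet> w > 0"
    using conjugate_square_greater_0_vec[OF w(1)] w(2) by simp
  define v where "v = (1 / sqrt (w \<bullet> w)) \<cdot>\<^sub>v w"
  have "A *\<^sub>v v = Re z \<cdot>\<^sub>v v"
    using w A unfolding v_def by (metis mult_mat_vec smult_smult_assoc mult.commute)
  moreover have "v \<bullet> v = 1"
    using \<open>w \<bullet> w > 0\<close> w(1) unfolding v_def
    by (simp add: power2_eq_square[symmetric])
  moreover have "v \<in> carrier_vec (Suc n)"
    using w(1) unfolding v_def by simp
  ultimately show ?thesis
    by blast
qed

lemma orth_conj_first_row_eigenvector:
  fixes A P :: "'a :: comm_ring_1 mat"
  assumes A: "A \<in> carrier_mat n n" "transpose_mat A = A" and P: "orth_mat n P"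
    and v: "A *\<^sub>v v = e \<cdot>\<^sub>v v" "v \<in> carrier_vec n" "\<forall>k<n. P $$ (0,k) = v $ k"
    and j: "0 < n" "j < n"
  shows "(P * A * transpose_mat P) $$ (0,j) = (if j = 0 then e else 0)"
proof -
  have PC: "P \<in> carrier_mat n n" using P by (simp add: orth_mat_carrier)
  have PA: "(P * A) $$ (0,k) = e * v $ k" if k: "k < n" for k
  proof -
    have "(P * A) $$ (0,k) = (\<Sum>a<n. v $ a * A $$ (k,a))"
      using index_mult_mat_lessThan[OF PC A(1) j(1) k] v(3) k symmetric_mat_index[OF A _ k] by simp
    also have "\<dots> = (A *\<^sub>v v) $ k"
      using A(1) v(2) k by (simp add: scalar_prod_def atLeast0LessThan mult.commute)
    finally show ?thesis using v(1) v(2) k by simp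
  qed
  have "(P * A * transpose_mat P) $$ (0,j) = (\<Sum>k<n. (P * A) $$ (0,k) * P $$ (j,k))"
    using PC A j by (intro index_mult_transpose_mat) auto
  also have "\<dots> = e * (P * transpose_mat P) $$ (0,j)"
    using j v(3) by (subst index_mult_transpose_mat[OF PC PC j]) (simp add: PA sum_distrib_left mult.assoc)
  also have "\<dots> = (if j = 0 then e else 0)"
    using P j unfolding orth_mat_def by simp
  finally show ?thesis .
qed

lemma symmetric_mat_four_block_first:
  assumes B: "B \<in> carrier_mat (Suc n) (Suc n)" "transpose_mat B = B"
    and row0: "\<forall>j<Suc n. B $$ (0,j) = (if j = 0 then e else 0)"
  shows "B = four_block_mat (mat_diag 1 (\<lambda>_. e)) (0\<^sub>m 1 n) (0\<^sub>m n 1)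
               (mat n n (\<lambda>(i,j). B $$ (Suc i, Suc j)))"
proof (rule eq_matI)
  fix i j assume "i < dim_row (four_block_mat (mat_diag 1 (\<lambda>_. e)) (0\<^sub>m 1 n) (0\<^sub>m n 1)
               (mat n n (\<lambda>(i,j). B $$ (Suc i, Suc j))))"
    "j < dim_col (four_block_mat (mat_diag 1 (\<lambda>_. e)) (0\<^sub>m 1 n) (0\<^sub>m n 1)
               (mat n n (\<lambda>(i,j). B $$ (Suc i, Suc j))))"
  then have i: "i < Suc n" and j: "j < Suc n" by (auto simp: mat_diag_def)
  have "B $$ (i,0) = (if i = 0 then e else 0)"
    using row0 symmetric_mat_index[OF B _ i] i by simp
  then show "B $$ (i,j) = four_block_mat (mat_diag 1 (\<lambda>_. e)) (0\<^sub>m 1 n) (0\<^sub>m n 1)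
               (mat n n (\<lambda>(i,j). B $$ (Suc i, Suc j))) $$ (i,j)"
    using i j row0 by (cases i; cases j) (auto simp: mat_diag_def)
qed (use B in \<open>auto simp: mat_diag_def\<close>)

lemma mat_diag_Suc_four_block:
  "mat_diag (Suc n) f
     = four_block_mat (mat_diag 1 (\<lambda>_. f 0)) (0\<^sub>m 1 n) (0\<^sub>m n 1) (mat_diag n (\<lambda>i. f (Suc i)))"
  by (rule eq_matI) (auto simp: mat_diag_def)

lemma transpose_conj_symmetric:
  fixes P A :: "'a :: comm_semiring_0 mat"
  assumes P: "P \<in> carrier_mat m n" and A: "A \<in> carrier_mat n n" "transpose_mat A = A"
  shows "transpose_mat (P * A * transpose_mat P) = P * A * transpose_mat P"
proof -
  have "transpose_mat (P * A * transpose_mat P) = transpose_mat (transpose_mat P) * transpose_mat (P * A)"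
    using P A(1) by (intro transpose_mult) auto
  also have "\<dots> = P * (transpose_mat A * transpose_mat P)"
    using P A(1) by (simp add: transpose_mult[OF P A(1)])
  also have "\<dots> = P * A * transpose_mat P"
    using P A by (simp add: assoc_mult_mat[of _ m n _ n _ m])
  finally show ?thesis .
qed

lemma transpose_mult_conj:
  fixes R P D :: "'a :: comm_semiring_0 mat"
  assumes "R \<in> carrier_mat n n" "P \<in> carrier_mat n n" "D \<in> carrier_mat n n"
  shows "transpose_mat (R * P) * D * (R * P) = transpose_mat P * (transpose_mat R * D * R) * P"
  using assms by (simp add: transpose_mult[of R n n P n] assoc_mult_mat[of _ n n _ n _ n])

lemma orth_mat_conj_cancel:
  assumes "orth_mat n P" "A \<in> carrier_mat n n"
  shows "transpose_mat P * (P * A * transpose_mat P) * P = A"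
proof -
  have P: "P \<in> carrier_mat n n" "transpose_mat P \<in> carrier_mat n n"
    using assms(1) by (auto simp: orth_mat_carrier)
  have "transpose_mat P * (P * A * transpose_mat P) * P
      = (transpose_mat P * P) * A * (transpose_mat P * P)"
    using P assms(2) by (simp add: assoc_mult_mat[of _ n n _ n _ n])
  then show ?thesis
    using assms unfolding orth_mat_def by simp
qed

lemma real_symmetric_deflation:
  fixes A :: "real mat"
  assumes A: "A \<in> carrier_mat (Suc n) (Suc n)" "transpose_mat A = A"
  shows "\<exists>P e B. orth_mat (Suc n) P \<and> B \<in> carrier_mat n n \<and> transpose_mat B = B \<and>
           P * A * transpose_mat P = four_block_mat (mat_diag 1 (\<lambda>_. e)) (0\<^sub>m 1 n) (0\<^sub>m n 1) B"
proof -
  obtain e v where v: "v \<in> carrier_vec (Suc n)" "A *\<^sub>v v = e \<cdot>\<^sub>v v" "v \<bullet> v = 1"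
    using real_symmetric_unit_eigenvector[OF A] by blast
  have "(\<Sum>k<Suc n. v $ k * v $ k) = 1"
    using v by (simp add: scalar_prod_def atLeast0LessThan)
  then obtain P where P: "orth_mat (Suc n) P" "\<forall>k<Suc n. P $$ (0,k) = v $ k"
    using exists_orth_mat_first_row[of "Suc n" "\<lambda>k. v $ k"] by auto
  define B where "B = P * A * transpose_mat P"
  have B: "B \<in> carrier_mat (Suc n) (Suc n)" "transpose_mat B = B"
    using orth_mat_carrier[OF P(1)] A unfolding B_def by (simp_all only: transpose_conj_symmetric) auto
  define B' where "B' = mat n n (\<lambda>(i,j). B $$ (Suc i, Suc j))"
  have "B = four_block_mat (mat_diag 1 (\<lambda>_. e)) (0\<^sub>m 1 n) (0\<^sub>m n 1) B'"
    unfolding B'_def using B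
    by (rule symmetric_mat_four_block_first)
       (use orth_conj_first_row_eigenvector[OF A P(1) v(2,1) P(2)] in \<open>simp add: B_def\<close>)
  moreover have "B' \<in> carrier_mat n n" "transpose_mat B' = B'"
    unfolding B'_def using symmetric_mat_index[OF B] by auto
  ultimately show ?thesis
    using P(1) unfolding B_def by blast
qed

lemma one_block_conj_diag:
  fixes R :: "'a :: comm_ring_1 mat"
  assumes R: "R \<in> carrier_mat n n"
  shows "transpose_mat (four_block_mat (1\<^sub>m 1) (0\<^sub>m 1 n) (0\<^sub>m n 1) R)
           * mat_diag (Suc n) (\<lambda>i. if i = 0 then e else \<mu> (i - 1))
           * four_block_mat (1\<^sub>m 1) (0\<^sub>m 1 n) (0\<^sub>m n 1) R
         = four_block_mat (mat_diag 1 (\<lambda>_. e)) (0\<^sub>m 1 n) (0\<^sub>m n 1) (transpose_mat R * mat_diag n \<mu> * R)"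
  unfolding mat_diag_Suc_four_block
  using R mult_carrier_mat[of "transpose_mat R" n n "mat_diag n \<mu>" n]
    left_mult_one_mat[of "mat_diag 1 (\<lambda>_. e)" 1 1] right_mult_one_mat[of "mat_diag 1 (\<lambda>_. e)" 1 1]
  by (simp add: transpose_four_block_diag mult_four_block_diag[where m=1 and n=n] del: One_nat_def)

theorem real_symmetric_spectral:
  fixes A :: "real mat"
  assumes "A \<in> carrier_mat n n" "transpose_mat A = A"
  shows "\<exists>Q \<mu>. orth_mat n Q \<and> A = transpose_mat Q * mat_diag n \<mu> * Q"
  using assms
proof (induction n arbitrary: A)
  case 0
  then show ?case
    by (intro exI[of _ "1\<^sub>m 0"] exI[of _ "\<lambda>_. 0"]) (auto simp: orth_mat_def)
next
  case (Suc n)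
  obtain P e B where P: "orth_mat (Suc n) P" and B: "B \<in> carrier_mat n n" "transpose_mat B = B"
    and PAP: "P * A * transpose_mat P = four_block_mat (mat_diag 1 (\<lambda>_. e)) (0\<^sub>m 1 n) (0\<^sub>m n 1) B"
    using real_symmetric_deflation[OF Suc.prems] by blast
  obtain R \<mu> where R: "orth_mat n R" "B = transpose_mat R * mat_diag n \<mu> * R"
    using Suc.IH[OF B] by blast
  define R1 where "R1 = four_block_mat (1\<^sub>m 1) (0\<^sub>m 1 n) (0\<^sub>m n 1) R"
  define \<mu>1 where "\<mu>1 i = (if i = 0 then e else \<mu> (i - 1))" for i
  have R1: "orth_mat (Suc n) R1"
    unfolding R1_def using orth_mat_four_block_diag[of 1 "1\<^sub>m 1" n R] R(1)
    by (simp add: orth_mat_def)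
  have "P * A * transpose_mat P = transpose_mat R1 * mat_diag (Suc n) \<mu>1 * R1"
    unfolding PAP R(2) R1_def \<mu>1_def using one_block_conj_diag[OF orth_mat_carrier[OF R(1)]] by simp
  then have "A = transpose_mat (R1 * P) * mat_diag (Suc n) \<mu>1 * (R1 * P)"
    using orth_mat_conj_cancel[OF P Suc.prems(1)] transpose_mult_conj[OF orth_mat_carrier[OF R1] orth_mat_carrier[OF P]]
    by simp
  then show ?case
    using orth_mat_mult[OF R1 P] by blast
qed

section \<open>Exponential of a real symmetric matrix\<close>

lemma pow_orth_conj_diag:
  fixes U :: "'a :: comm_ring_1 mat"
  assumes U: "orth_mat n U"
  shows "(transpose_mat U * mat_diag n z * U) ^\<^sub>m k = transpose_mat U * mat_diag n (\<lambda>j. z j ^ k) * U"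
proof (induction k)
  case 0
  have "transpose_mat U \<in> carrier_mat n n" "dim_col U = n"
    using U by (auto simp: orth_mat_def)
  then show ?case
    using U unfolding orth_mat_def by (simp add: right_mult_one_mat[of _ n n])
next
  case (Suc k)
  have UC: "U \<in> carrier_mat n n" "transpose_mat U \<in> carrier_mat n n"
    using U by (auto simp: orth_mat_carrier)
  have "(transpose_mat U * mat_diag n z * U) ^\<^sub>m Suc k
      = transpose_mat U * mat_diag n (\<lambda>j. z j ^ k) * (U * transpose_mat U) * mat_diag n z * U"
    using Suc.IH UC by (simp add: assoc_mult_mat[of _ n n _ n _ n] mult_carrier_mat[of _ n n _ n])
  also have "\<dots> = transpose_mat U * (mat_diag n (\<lambda>j. z j ^ k) * mat_diag n z) * U"
    using U UC unfolding orth_mat_def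
    by (simp add: assoc_mult_mat[of _ n n _ n _ n] mult_carrier_mat[of _ n n _ n] left_mult_one_mat[of _ n n]
        del: mat_diag_diag)
  also have "\<dots> = transpose_mat U * mat_diag n (\<lambda>j. z j ^ Suc k) * U"
    by (simp add: mult.commute)
  finally show ?case .
qed

lemma mat_exp_orth_conj_diag_index:
  fixes U :: "complex mat"
  assumes U: "orth_mat n U" and ab: "a < n" "b < n"
  shows "mat_exp (transpose_mat U * mat_diag n z * U) $$ (a,b) = (\<Sum>j<n. U $$ (j,a) * U $$ (j,b) * exp (z j))"
proof -
  have UC: "U \<in> carrier_mat n n"
    using U by (rule orth_mat_carrier)
  have "(\<lambda>k. w ^ k / fact k) sums exp w" for w :: complex
    using exp_converges[of w] by (simp add: scaleR_conv_of_real divide_inverse mult.commute)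
  then have "(\<lambda>k. (\<Sum>j<n. U $$ (j,a) * U $$ (j,b) * (z j ^ k / fact k))) sums (\<Sum>j<n. U $$ (j,a) * U $$ (j,b) * exp (z j))"
    by (intro sums_sum sums_mult)
  moreover have "((transpose_mat U * mat_diag n z * U) ^\<^sub>m k) $$ (a,b) / fact k
      = (\<Sum>j<n. U $$ (j,a) * U $$ (j,b) * (z j ^ k / fact k))" for k
    unfolding pow_orth_conj_diag[OF U] index_transpose_diag_mult_mat[OF UC ab]
    by (simp add: sum_divide_distrib ac_simps)
  ultimately show ?thesis
    using UC ab unfolding mat_exp_def by (simp add: sums_iff)
qed

lemma orth_mat_of_real:
  assumes "orth_mat n Q"
  shows "orth_mat n (map_mat complex_of_real Q)"
proof -
  have Q: "Q \<in> carrier_mat n n" "transpose_mat Q \<in> carrier_mat n n"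
    using assms by (auto simp: orth_mat_carrier)
  have "transpose_mat (map_mat complex_of_real Q) * map_mat complex_of_real Q = map_mat complex_of_real (transpose_mat Q * Q)"
    "map_mat complex_of_real Q * transpose_mat (map_mat complex_of_real Q) = map_mat complex_of_real (Q * transpose_mat Q)"
    using Q by (simp_all add: map_mat_transpose of_real_hom.mat_hom_mult)
  then show ?thesis
    using assms unfolding orth_mat_def by (simp add: of_real_hom.mat_hom_one)
qed

lemma mat_exp_real_symmetric_index:
  fixes H Q :: "real mat"
  assumes H: "H \<in> carrier_mat n n" and Q: "orth_mat n Q"
    and eq: "t \<cdot>\<^sub>m H = transpose_mat Q * mat_diag n \<mu> * Q" and ab: "a < n" "b < n"
  shows "mat_exp ((\<i> * complex_of_real t) \<cdot>\<^sub>m map_mat complex_of_real H) $$ (a,b)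
       = (\<Sum>j<n. complex_of_real (Q $$ (j,a) * Q $$ (j,b)) * exp (\<i> * complex_of_real (\<mu> j)))"
proof -
  let ?U = "map_mat complex_of_real Q"
  have QC: "Q \<in> carrier_mat n n" and UC: "?U \<in> carrier_mat n n"
    using Q by (auto simp: orth_mat_carrier)
  have "(\<i> * complex_of_real t) \<cdot>\<^sub>m map_mat complex_of_real H
      = transpose_mat ?U * mat_diag n (\<lambda>j. \<i> * complex_of_real (\<mu> j)) * ?U"
  proof (rule eq_matI)
    fix c d assume "c < dim_row (transpose_mat ?U * mat_diag n (\<lambda>j. \<i> * complex_of_real (\<mu> j)) * ?U)"
      "d < dim_col (transpose_mat ?U * mat_diag n (\<lambda>j. \<i> * complex_of_real (\<mu> j)) * ?U)"
    then have cd: "c < n" "d < n" using QC by auto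
    have "t * H $$ (c,d) = (\<Sum>j<n. Q $$ (j,c) * \<mu> j * Q $$ (j,d))"
      using arg_cong[OF eq, of "\<lambda>M. M $$ (c,d)"] H cd by (simp add: index_transpose_diag_mult_mat[OF QC cd])
    then have "\<i> * complex_of_real (t * H $$ (c,d)) = (\<Sum>j<n. ?U $$ (j,c) * (\<i> * complex_of_real (\<mu> j)) * ?U $$ (j,d))"
      using cd QC by (simp add: sum_distrib_left ac_simps)
    then show "((\<i> * complex_of_real t) \<cdot>\<^sub>m map_mat complex_of_real H) $$ (c,d)
        = (transpose_mat ?U * mat_diag n (\<lambda>j. \<i> * complex_of_real (\<mu> j)) * ?U) $$ (c,d)"
      using H cd by (simp add: index_transpose_diag_mult_mat[OF UC cd] mult.assoc)
  qed (use H QC in auto)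
  then show ?thesis
    using ab QC by (simp add: mat_exp_orth_conj_diag_index[OF orth_mat_of_real[OF Q] ab])
qed

section \<open>Unit transfer amplitude\<close>

text \<open>For an eigenvector with components a and b at the two vertices and eigenphase \<phi>
  relative to the phase of the transfer amplitude, the three ways it can contribute.\<close>

definition transfer_phase_cond :: "real \<Rightarrow> real \<Rightarrow> real \<Rightarrow> bool" where
  "transfer_phase_cond a b \<phi> \<longleftrightarrow>
     (a = 0 \<and> b = 0) \<or>
     (a = b \<and> a \<noteq> 0 \<and> (\<exists>k::int. even k \<and> \<phi> = pi * k)) \<or>
     (a = - b \<and> a \<noteq> 0 \<and> (\<exists>k::int. odd k \<and> \<phi> = pi * k))"

lemma cos_eq_1_even_pi:
  assumes "cos \<phi> = 1"
  shows "\<exists>k::int. even k \<and> \<phi> = pi * k"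
proof -
  obtain n :: int where "\<phi> = of_int n * 2 * pi"
    using assms cos_one_2pi_int by blast
  then show ?thesis
    by (intro exI[of _ "2 * n"]) simp
qed

lemma cos_eq_minus_1_odd_pi:
  assumes "cos \<phi> = -1"
  shows "\<exists>k::int. odd k \<and> \<phi> = pi * k"
proof -
  have "cos (\<phi> - pi) = 1"
    using assms by simp
  then obtain n :: int where "\<phi> - pi = of_int n * 2 * pi"
    using cos_one_2pi_int by blast
  then show ?thesis
    by (intro exI[of _ "2 * n + 1"]) (simp add: algebra_simps)
qed

lemma sq_add_sq_eq_twice_mult_cases:
  fixes a b c :: real
  assumes e: "a\<^sup>2 + b\<^sup>2 = 2 * a * b * c" and c: "-1 \<le> c" "c \<le> 1"
  shows "(a = 0 \<and> b = 0) \<or> (a = b \<and> a \<noteq> 0 \<and> c = 1) \<or> (a = - b \<and> a \<noteq> 0 \<and> c = -1)"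
proof -
  consider "a * b > 0" | "a * b < 0" | "a * b = 0" by linarith
  then show ?thesis
  proof cases
    case 1
    have "(a - b)\<^sup>2 = 2 * (a * b) * (c - 1)"
      using e by (simp add: power2_diff algebra_simps)
    also have "\<dots> \<le> 0"
      using 1 c by (simp add: mult_nonneg_nonpos)
    finally have ab: "a = b" by simp
    from e have "(b * b) * (c - 1) = 0"
      unfolding ab by (simp add: power2_eq_square algebra_simps)
    then show ?thesis
      using ab 1 by auto
  next
    case 2
    have "(a + b)\<^sup>2 = 2 * (a * b) * (c + 1)"
      using e by (simp add: power2_sum algebra_simps)
    also have "\<dots> \<le> 0"
      by (rule mult_nonpos_nonneg) (use 2 c in linarith)+
    finally have ab: "a = - b" by (simp add: add_eq_0_iff)
    have "2 * ((b * b) * (c + 1)) = 2 * b * b * c + ((- b)\<^sup>2 + b\<^sup>2)"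
      by (simp add: power2_eq_square algebra_simps)
    also have "\<dots> = 0"
      using e unfolding ab by simp
    finally show ?thesis
      using ab 2 by auto
  next
    case 3
    then have "a\<^sup>2 + b\<^sup>2 = 0"
      using e by auto
    then show ?thesis
      by simp
  qed
qed

lemma transfer_phase_cond_of_sq_eq:
  assumes "a\<^sup>2 + b\<^sup>2 = 2 * a * b * cos \<phi>"
  shows "transfer_phase_cond a b \<phi>"
  using sq_add_sq_eq_twice_mult_cases[OF assms] cos_eq_1_even_pi cos_eq_minus_1_odd_pi
  unfolding transfer_phase_cond_def by auto

lemma unit_amplitude_transfer_phase:
  fixes a b \<mu> :: "nat \<Rightarrow> real"
  assumes a: "(\<Sum>j<n. (a j)\<^sup>2) = 1" and b: "(\<Sum>j<n. (b j)\<^sup>2) = 1"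
    and amp: "cmod (\<Sum>j<n. complex_of_real (a j * b j) * exp (\<i> * complex_of_real (\<mu> j))) = 1"
  shows "\<exists>\<theta>. \<forall>j<n. transfer_phase_cond (a j) (b j) (\<mu> j - \<theta>)"
proof -
  define \<gamma> where "\<gamma> = (\<Sum>j<n. complex_of_real (a j * b j) * exp (\<i> * complex_of_real (\<mu> j)))"
  define \<theta> where "\<theta> = Arg \<gamma>"
  have "cmod \<gamma> = 1"
    using amp unfolding \<gamma>_def .
  then have "cis \<theta> = \<gamma>"
    using cis_Arg[of \<gamma>] unfolding \<theta>_def by (fastforce simp: sgn_div_norm)
  then have "1 = cis (- \<theta>) * \<gamma>"
    by (metis cis_mult cis_zero add.left_inverse)
  also have "\<dots> = (\<Sum>j<n. complex_of_real (a j * b j) * cis (\<mu> j - \<theta>))"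
    unfolding \<gamma>_def sum_distrib_left
    by (intro sum.cong refl) (simp add: cis_conv_exp[symmetric] cis_mult mult.left_commute)
  finally have "Re (\<Sum>j<n. complex_of_real (a j * b j) * cis (\<mu> j - \<theta>)) = 1"
    by (metis one_complex.sel(1))
  then have "(\<Sum>j<n. a j * b j * cos (\<mu> j - \<theta>)) = 1"
    by simp
  define d where "d j = ((a j)\<^sup>2 + (b j)\<^sup>2) / 2 - a j * b j * cos (\<mu> j - \<theta>)" for j
  have "(\<Sum>j<n. d j) = 0"
    using a b \<open>(\<Sum>j<n. a j * b j * cos (\<mu> j - \<theta>)) = 1\<close>
    unfolding d_def by (simp add: sum_subtractf sum.distrib sum_divide_distrib[symmetric])
  moreover have "d j \<ge> 0" for j
  proof -
    let ?c = "cos (\<mu> j - \<theta>)" and ?s = "sin (\<mu> j - \<theta>)"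
    have "0 \<le> (a j - b j * ?c)\<^sup>2 + (b j * ?s)\<^sup>2"
      by simp
    also have "\<dots> = (a j)\<^sup>2 - 2 * a j * b j * ?c + (b j)\<^sup>2"
      by (simp add: power2_eq_square algebra_simps flip: distrib_left)
    also have "\<dots> = 2 * d j"
      unfolding d_def by simp
    finally show ?thesis
      by simp
  qed
  ultimately have "d j = 0" if "j < n" for j
    using that by (simp add: sum_nonneg_eq_0_iff)
  then show ?thesis
    by (intro exI[of _ \<theta>] allI impI transfer_phase_cond_of_sq_eq) (simp add: d_def)
qed

lemma transfer_phase_cond_shift:
  assumes "transfer_phase_cond a b \<phi>"
  shows "transfer_phase_cond a b (\<phi> + 2 * pi * of_int N)"
proof -
  have "\<phi> + 2 * pi * of_int N = pi * of_int (k + 2 * N)" if "\<phi> = pi * of_int k" for k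
    using that by (simp add: algebra_simps)
  then show ?thesis
    using assms unfolding transfer_phase_cond_def by (metis even_add even_mult_iff even_numeral)
qed

lemma transfer_phase_cond_pos_int:
  fixes r :: real
  assumes "transfer_phase_cond a b (pi * r)" and "0 < r"
  shows "(a = 0 \<and> b = 0) \<or>
    (a = b \<and> a \<noteq> 0 \<and> (\<exists>k::int. 0 < k \<and> even k \<and> r = k)) \<or>
    (a = - b \<and> a \<noteq> 0 \<and> (\<exists>k::int. 0 < k \<and> odd k \<and> r = k))"
proof -
  have "r = of_int k \<and> 0 < k" if "pi * r = pi * of_int k" for k :: int
    using that \<open>0 < r\<close> by simp
  then show ?thesis
    using assms(1) unfolding transfer_phase_cond_def by metis
qed

lemma exists_phase_shift_below:
  fixes \<mu> :: "nat \<Rightarrow> real"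
  shows "\<exists>N::nat. \<forall>j<n. \<theta> - 2 * pi * N < \<mu> j"
proof -
  obtain N :: nat where N: "(\<Sum>j<n. \<bar>\<mu> j\<bar>) + \<bar>\<theta>\<bar> < N"
    using reals_Archimedean2 by blast
  have "\<theta> - 2 * pi * N < \<mu> j" if "j < n" for j
  proof -
    have "\<bar>\<mu> j\<bar> \<le> (\<Sum>j<n. \<bar>\<mu> j\<bar>)"
      using that by (intro member_le_sum) auto
    moreover have "1 * real N \<le> (2 * pi) * N"
      using pi_ge_two by (intro mult_right_mono) auto
    ultimately show ?thesis
      using N by linarith
  qed
  then show ?thesis by blast
qed

section \<open>Reordering the eigenbasis\<close>

lemma sort_key_desc_nth_mono:
  fixes f :: "'a \<Rightarrow> real"
  assumes "i \<le> j" "j < length xs"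
  shows "f (sort_key (\<lambda>x. - f x) xs ! j) \<le> f (sort_key (\<lambda>x. - f x) xs ! i)"
proof -
  have "sorted (map (\<lambda>x. - f x) (sort_key (\<lambda>x. - f x) xs))" by simp
  from sorted_nth_mono[OF this assms(1)] assms show ?thesis by simp
qed

lemma exists_sorted_class_enumeration:
  fixes f :: "nat \<Rightarrow> real"
  assumes disj: "\<And>j. P j \<Longrightarrow> \<not> R j"
  shows "\<exists>p l m. bij_betw p {..<n} {..<n} \<and> l \<le> m \<and> m \<le> n \<and>
    (\<forall>i<l. P (p i)) \<and> (\<forall>i. l \<le> i \<and> i < m \<longrightarrow> R (p i)) \<and>
    (\<forall>i. m \<le> i \<and> i < n \<longrightarrow> \<not> P (p i) \<and> \<not> R (p i)) \<and>
    (\<forall>i j. i \<le> j \<and> j < l \<longrightarrow> f (p j) \<le> f (p i)) \<and>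
    (\<forall>i j. l \<le> i \<and> i \<le> j \<and> j < m \<longrightarrow> f (p j) \<le> f (p i))"
proof -
  define L0 where "L0 = sort_key (\<lambda>j. - f j) (filter P [0..<n])"
  define L1 where "L1 = sort_key (\<lambda>j. - f j) (filter R [0..<n])"
  define L2 where "L2 = filter (\<lambda>j. \<not> P j \<and> \<not> R j) [0..<n]"
  define L where "L = L0 @ L1 @ L2"
  have setL: "set L = {..<n}" and dist: "distinct L"
    using disj unfolding L_def L0_def L1_def L2_def by auto
  then have len: "length L = n"
    by (metis card_lessThan distinct_card)
  then have bij: "bij_betw ((!) L) {..<n} {..<n}"
    using setL dist by (intro bij_betw_nth) auto
  have L0: "L ! i = L0 ! i" "P (L ! i)" if "i < length L0" for i
    using that nth_mem[of i L0] unfolding L_def by (auto simp: nth_append L0_def)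
  have L1: "L ! i = L1 ! (i - length L0)" "R (L ! i)" if "length L0 \<le> i" "i < length L0 + length L1" for i
    using that nth_mem[of "i - length L0" L1] unfolding L_def by (auto simp: nth_append L1_def)
  have L2: "\<not> P (L ! i) \<and> \<not> R (L ! i)" if "length L0 + length L1 \<le> i" "i < n" for i
  proof -
    have "L ! i = L2 ! (i - length L0 - length L1)" "i - length L0 - length L1 < length L2"
      using that len unfolding L_def by (auto simp: nth_append)
    then show ?thesis
      unfolding L2_def using nth_mem by fastforce
  qed
  have "f (L ! j) \<le> f (L ! i)" if "i \<le> j" "j < length L0" for i j
    using that L0(1)[of i] L0(1)[of j] sort_key_desc_nth_mono[of i j] unfolding L0_def by simp
  moreover have "f (L ! j) \<le> f (L ! i)" if "length L0 \<le> i" "i \<le> j" "j < length L0 + length L1" for i j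
    using that L1(1)[of i] L1(1)[of j] sort_key_desc_nth_mono[where f = f and xs = "filter R [0..<n]" and i = "i - length L0"]
    unfolding L1_def by simp
  moreover have "length L0 + length L1 \<le> n"
    using len unfolding L_def by simp
  ultimately show ?thesis
    using bij L0(2) L1(2) L2
    by (intro exI[of _ "(!) L"] exI[of _ "length L0"] exI[of _ "length L0 + length L1"]) auto
qed

lemma orth_mat_signed_permute_rows:
  fixes Q :: "'a :: comm_ring_1 mat"
  assumes Q: "orth_mat n Q" and p: "bij_betw p {..<n} {..<n}" and s: "\<And>i. i < n \<Longrightarrow> s i * s i = 1"
  shows "orth_mat n (mat n n (\<lambda>(i,c). s i * Q $$ (p i, c)))" (is "orth_mat n ?Q")
proof -
  have QC: "Q \<in> carrier_mat n n" and Q'C: "?Q \<in> carrier_mat n n"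
    using Q by (auto simp: orth_mat_carrier)
  have pn: "p i < n" if "i < n" for i
    using p that by (auto dest: bij_betw_apply)
  have ss: "s i * (s i * x) = x" if "i < n" for i x
    using s[OF that] by (metis mult.assoc mult_1)
  have "(transpose_mat ?Q * ?Q) $$ (c,d) = 1\<^sub>m n $$ (c,d)" if "c < n" "d < n" for c d
  proof -
    have "(transpose_mat ?Q * ?Q) $$ (c,d) = (\<Sum>i<n. Q $$ (p i, c) * Q $$ (p i, d))"
      using that by (subst index_transpose_mult_mat[OF Q'C Q'C]) (auto intro!: sum.cong simp: ac_simps ss)
    also have "\<dots> = (\<Sum>j<n. Q $$ (j, c) * Q $$ (j, d))"
      by (rule sum.reindex_bij_betw[OF p, of "\<lambda>j. Q $$ (j, c) * Q $$ (j, d)"])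
    also have "\<dots> = 1\<^sub>m n $$ (c,d)"
      using Q that unfolding orth_mat_def by (simp add: index_transpose_mult_mat[OF QC QC, symmetric])
    finally show ?thesis .
  qed
  moreover have "(?Q * transpose_mat ?Q) $$ (i,i') = 1\<^sub>m n $$ (i,i')" if "i < n" "i' < n" for i i'
  proof -
    have "(?Q * transpose_mat ?Q) $$ (i,i') = s i * s i' * (Q * transpose_mat Q) $$ (p i, p i')"
      using that pn
      by (simp only: index_mult_transpose_mat[OF Q'C Q'C that] index_mult_transpose_mat[OF QC QC pn])
        (auto simp: sum_distrib_left ac_simps intro!: sum.cong)
    also have "\<dots> = 1\<^sub>m n $$ (i,i')"
      using Q that pn s bij_betw_imp_inj_on[OF p] unfolding orth_mat_def by (auto dest: inj_onD)
    finally show ?thesis .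
  qed
  ultimately show ?thesis
    unfolding orth_mat_def by auto
qed

lemma signed_permute_rows_conj_diag:
  fixes Q :: "'a :: comm_ring_1 mat"
  assumes Q: "Q \<in> carrier_mat n n" and p: "bij_betw p {..<n} {..<n}" and s: "\<And>i. i < n \<Longrightarrow> s i * s i = 1"
  shows "transpose_mat (mat n n (\<lambda>(i,c). s i * Q $$ (p i, c))) * mat_diag n (\<lambda>i. f (p i))
           * mat n n (\<lambda>(i,c). s i * Q $$ (p i, c))
         = transpose_mat Q * mat_diag n f * Q" (is "transpose_mat ?Q * _ * ?Q = _")
proof (rule eq_matI)
  have ss: "s i * (s i * x) = x" if "i < n" for i x
    using s[OF that] by (metis mult.assoc mult_1)
  fix c d assume "c < dim_row (transpose_mat Q * mat_diag n f * Q)" "d < dim_col (transpose_mat Q * mat_diag n f * Q)"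
  then have cd: "c < n" "d < n" using Q by auto
  have "(transpose_mat ?Q * mat_diag n (\<lambda>i. f (p i)) * ?Q) $$ (c,d) = (\<Sum>i<n. Q $$ (p i, c) * f (p i) * Q $$ (p i, d))"
    using cd by (subst index_transpose_diag_mult_mat[of _ n n]) (auto intro!: sum.cong simp: ac_simps ss)
  also have "\<dots> = (\<Sum>j<n. Q $$ (j, c) * f j * Q $$ (j, d))"
    by (rule sum.reindex_bij_betw[OF p, of "\<lambda>j. Q $$ (j, c) * f j * Q $$ (j, d)"])
  finally show "(transpose_mat ?Q * mat_diag n (\<lambda>i. f (p i)) * ?Q) $$ (c,d) = (transpose_mat Q * mat_diag n f * Q) $$ (c,d)"
    by (simp add: index_transpose_diag_mult_mat[OF Q cd])
qed (use Q in auto)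

lemma orth_conj_diag_shift:
  assumes Q: "orth_mat n Q"
  shows "transpose_mat Q * mat_diag n f * Q
    = transpose_mat Q * mat_diag n (\<lambda>j. f j - \<theta>) * Q + \<theta> \<cdot>\<^sub>m 1\<^sub>m n"
proof (rule eq_matI)
  have QC: "Q \<in> carrier_mat n n" using Q by (rule orth_mat_carrier)
  fix c d assume "c < dim_row (transpose_mat Q * mat_diag n (\<lambda>j. f j - \<theta>) * Q + \<theta> \<cdot>\<^sub>m 1\<^sub>m n)"
    "d < dim_col (transpose_mat Q * mat_diag n (\<lambda>j. f j - \<theta>) * Q + \<theta> \<cdot>\<^sub>m 1\<^sub>m n)"
  then have cd: "c < n" "d < n" by auto
  have "(\<Sum>j<n. Q $$ (j,c) * f j * Q $$ (j,d))
      = (\<Sum>j<n. Q $$ (j,c) * (f j - \<theta>) * Q $$ (j,d)) + \<theta> * (\<Sum>j<n. Q $$ (j,c) * Q $$ (j,d))"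
    by (simp add: sum_distrib_left algebra_simps flip: sum.distrib)
  also have "(\<Sum>j<n. Q $$ (j,c) * Q $$ (j,d)) = 1\<^sub>m n $$ (c,d)"
    using Q cd unfolding orth_mat_def by (simp add: index_transpose_mult_mat[OF QC QC, symmetric])
  finally show "(transpose_mat Q * mat_diag n f * Q) $$ (c,d)
      = (transpose_mat Q * mat_diag n (\<lambda>j. f j - \<theta>) * Q + \<theta> \<cdot>\<^sub>m 1\<^sub>m n) $$ (c,d)"
    using cd QC by (simp add: index_transpose_diag_mult_mat[OF QC cd])
qed (use Q in \<open>auto simp: orth_mat_def\<close>)

lemma transfer_blocks:
  fixes a b r0 :: "nat \<Rightarrow> real"
  assumes cond: "\<And>j. j < n \<Longrightarrow> 0 < r0 j \<and> transfer_phase_cond (a j) (b j) (pi * r0 j)"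
  shows "\<exists>p l m. bij_betw p {..<n} {..<n} \<and> l \<le> m \<and> m \<le> n \<and>
    (\<forall>i<l. b (p i) = a (p i) \<and> (\<exists>k::int. k > 0 \<and> even k \<and> r0 (p i) = real_of_int k)) \<and>
    (\<forall>i. l \<le> i \<and> i < m \<longrightarrow>
       b (p i) = - a (p i) \<and> (\<exists>k::int. k > 0 \<and> odd k \<and> r0 (p i) = real_of_int k)) \<and>
    (\<forall>i. m \<le> i \<and> i < n \<longrightarrow> a (p i) = 0 \<and> b (p i) = 0) \<and>
    (\<forall>i j. i \<le> j \<and> j < l \<longrightarrow> r0 (p j) \<le> r0 (p i)) \<and>
    (\<forall>i j. l \<le> i \<and> i \<le> j \<and> j < m \<longrightarrow> r0 (p j) \<le> r0 (p i))"
proof -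
  have disj: "\<not> (a j = - b j \<and> a j \<noteq> 0)" if "a j = b j \<and> a j \<noteq> 0" for j
    using that by auto
  obtain p l m where p: "bij_betw p {..<n} {..<n}" and lm: "l \<le> m" "m \<le> n"
    and cls: "\<forall>i<l. a (p i) = b (p i) \<and> a (p i) \<noteq> 0"
      "\<forall>i. l \<le> i \<and> i < m \<longrightarrow> a (p i) = - b (p i) \<and> a (p i) \<noteq> 0"
      "\<forall>i. m \<le> i \<and> i < n \<longrightarrow>
         \<not> (a (p i) = b (p i) \<and> a (p i) \<noteq> 0) \<and> \<not> (a (p i) = - b (p i) \<and> a (p i) \<noteq> 0)"
    and sorted: "\<forall>i j. i \<le> j \<and> j < l \<longrightarrow> r0 (p j) \<le> r0 (p i)"
      "\<forall>i j. l \<le> i \<and> i \<le> j \<and> j < m \<longrightarrow> r0 (p j) \<le> r0 (p i)"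
    using exists_sorted_class_enumeration[of "\<lambda>j. a j = b j \<and> a j \<noteq> 0" "\<lambda>j. a j = - b j \<and> a j \<noteq> 0",
        OF disj, of n r0]
    by blast
  have cases: "(a (p i) = 0 \<and> b (p i) = 0) \<or>
      (a (p i) = b (p i) \<and> a (p i) \<noteq> 0 \<and> (\<exists>k::int. 0 < k \<and> even k \<and> r0 (p i) = k)) \<or>
      (a (p i) = - b (p i) \<and> a (p i) \<noteq> 0 \<and> (\<exists>k::int. 0 < k \<and> odd k \<and> r0 (p i) = k))" if "i < n" for i
    using cond[OF bij_betw_apply[OF p, simplified, OF that]]
      transfer_phase_cond_pos_int[of "a (p i)" "b (p i)" "r0 (p i)"] by simp
  have "\<forall>i<l. b (p i) = a (p i) \<and> (\<exists>k::int. k > 0 \<and> even k \<and> r0 (p i) = real_of_int k)"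
  proof (intro allI impI)
    fix i assume "i < l"
    with cases[of i] cls(1) lm show "b (p i) = a (p i) \<and> (\<exists>k::int. k > 0 \<and> even k \<and> r0 (p i) = real_of_int k)"
      by auto
  qed
  moreover have "\<forall>i. l \<le> i \<and> i < m \<longrightarrow>
      b (p i) = - a (p i) \<and> (\<exists>k::int. k > 0 \<and> odd k \<and> r0 (p i) = real_of_int k)"
  proof (intro allI impI)
    fix i assume "l \<le> i \<and> i < m"
    with cases[of i] cls(2) lm show "b (p i) = - a (p i) \<and> (\<exists>k::int. k > 0 \<and> odd k \<and> r0 (p i) = real_of_int k)"
      by auto
  qed
  moreover have "\<forall>i. m \<le> i \<and> i < n \<longrightarrow> a (p i) = 0 \<and> b (p i) = 0"
  proof (intro allI impI)
    fix i assume "m \<le> i \<and> i < n"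
    with cases[of i] cls(3) show "a (p i) = 0 \<and> b (p i) = 0"
      by auto
  qed
  ultimately show ?thesis
    using p lm sorted by blast
qed

lemma transfer_normal_form:
  fixes Q0 :: "real mat" and r0 :: "nat \<Rightarrow> real"
  assumes Q0: "orth_mat n Q0" and n: "1 < n"
    and cond: "\<And>j. j < n \<Longrightarrow> 0 < r0 j \<and> transfer_phase_cond (Q0 $$ (j,0)) (Q0 $$ (j,1)) (pi * r0 j)"
    and M: "M = transpose_mat Q0 * mat_diag n (\<lambda>j. pi * r0 j) * Q0 + \<theta> \<cdot>\<^sub>m 1\<^sub>m n"
  shows "\<exists>(\<theta>::real) (l::nat) (m::nat) (Q::real mat) (r::nat \<Rightarrow> real) (x::nat \<Rightarrow> real).
           l \<le> m \<and> m \<le> n \<and>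
           Q \<in> carrier_mat n n \<and>
           transpose_mat Q * Q = 1\<^sub>m n \<and> Q * transpose_mat Q = 1\<^sub>m n \<and>
           (\<forall>i<l. \<exists>k::int. k > 0 \<and> even k \<and> r i = real_of_int k) \<and>
           (\<forall>i. l \<le> i \<and> i < m \<longrightarrow> (\<exists>k::int. k > 0 \<and> odd k \<and> r i = real_of_int k)) \<and>
           (\<forall>i j. i \<le> j \<and> j < l \<longrightarrow> r j \<le> r i) \<and>
           (\<forall>i j. l \<le> i \<and> i \<le> j \<and> j < m \<longrightarrow> r j \<le> r i) \<and>
           M = transpose_mat Q * mat_diag n (\<lambda>i. pi * r i) * Q + \<theta> \<cdot>\<^sub>m 1\<^sub>m n \<and>
           (\<forall>j<m. x j \<ge> 0) \<and>
           (\<forall>j<m. transpose_mat Q $$ (0, j) = x j) \<and>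
           (\<forall>j. m \<le> j \<and> j < n \<longrightarrow> transpose_mat Q $$ (0, j) = 0) \<and>
           (\<forall>j<l. transpose_mat Q $$ (1, j) = x j) \<and>
           (\<forall>j. l \<le> j \<and> j < m \<longrightarrow> transpose_mat Q $$ (1, j) = - x j) \<and>
           (\<forall>j. m \<le> j \<and> j < n \<longrightarrow> transpose_mat Q $$ (1, j) = 0)"
proof -
  define a where "a j = Q0 $$ (j,0)" for j
  define b where "b j = Q0 $$ (j,1)" for j
  obtain p l m where p: "bij_betw p {..<n} {..<n}" and lm: "l \<le> m" "m \<le> n"
    and even_block: "\<forall>i<l. b (p i) = a (p i) \<and> (\<exists>k::int. k > 0 \<and> even k \<and> r0 (p i) = real_of_int k)"
    and odd_block: "\<forall>i. l \<le> i \<and> i < m \<longrightarrow>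
      b (p i) = - a (p i) \<and> (\<exists>k::int. k > 0 \<and> odd k \<and> r0 (p i) = real_of_int k)"
    and zero_block: "\<forall>i. m \<le> i \<and> i < n \<longrightarrow> a (p i) = 0 \<and> b (p i) = 0"
    and sorted: "\<forall>i j. i \<le> j \<and> j < l \<longrightarrow> r0 (p j) \<le> r0 (p i)"
      "\<forall>i j. l \<le> i \<and> i \<le> j \<and> j < m \<longrightarrow> r0 (p j) \<le> r0 (p i)"
    using transfer_blocks[of n r0 a b] cond unfolding a_def b_def by blast
  define s where "s i = (if a (p i) \<ge> 0 then 1 else - 1 :: real)" for i
  define Q where "Q = mat n n (\<lambda>(i,c). s i * Q0 $$ (p i, c))"
  have s: "s i * s i = 1" "s i * a (p i) = \<bar>a (p i)\<bar>" for i
    unfolding s_def by auto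
  have QT: "transpose_mat Q $$ (0, j) = \<bar>a (p j)\<bar>" "transpose_mat Q $$ (1, j) = s j * b (p j)" if "j < n" for j
    using that n s(2) unfolding Q_def a_def b_def by auto
  have "orth_mat n Q"
    unfolding Q_def using Q0 p s(1) by (rule orth_mat_signed_permute_rows)
  moreover have "transpose_mat Q0 * mat_diag n (\<lambda>j. pi * r0 j) * Q0 = transpose_mat Q * mat_diag n (\<lambda>i. pi * r0 (p i)) * Q"
    unfolding Q_def using orth_mat_carrier[OF Q0] p s(1) by (rule signed_permute_rows_conj_diag[symmetric])
  moreover have "\<forall>j<m. transpose_mat Q $$ (0, j) = \<bar>a (p j)\<bar>"
    "\<forall>j. m \<le> j \<and> j < n \<longrightarrow> transpose_mat Q $$ (0, j) = 0"
    "\<forall>j<l. transpose_mat Q $$ (1, j) = \<bar>a (p j)\<bar>"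
    "\<forall>j. l \<le> j \<and> j < m \<longrightarrow> transpose_mat Q $$ (1, j) = - \<bar>a (p j)\<bar>"
    "\<forall>j. m \<le> j \<and> j < n \<longrightarrow> transpose_mat Q $$ (1, j) = 0"
    using QT s(2) lm even_block odd_block zero_block by auto
  ultimately show ?thesis
    using lm sorted even_block odd_block M unfolding orth_mat_def
    by (intro exI[of _ \<theta>] exI[of _ l] exI[of _ m] exI[of _ Q] exI[of _ "\<lambda>i. r0 (p i)"]
        exI[of _ "\<lambda>i. \<bar>a (p i)\<bar>"]) simp
qed

theorem proposition3p2:
  fixes H :: "real mat" and n :: nat and t0 :: real
  assumes "H \<in> carrier_mat n n" and "n \<ge> 2"
    and "transpose_mat H = H"
    and "cmod (mat_exp ((\<i> * complex_of_real t0) \<cdot>\<^sub>m map_mat complex_of_real H) $$ (0, 1)) = 1"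
  shows "\<exists>(\<theta>::real) (l::nat) (m::nat) (Q::real mat) (r::nat \<Rightarrow> real) (x::nat \<Rightarrow> real).
           l \<le> m \<and> m \<le> n \<and>
           Q \<in> carrier_mat n n \<and>
           transpose_mat Q * Q = 1\<^sub>m n \<and> Q * transpose_mat Q = 1\<^sub>m n \<and>
           (\<forall>i<l. \<exists>k::int. k > 0 \<and> even k \<and> r i = real_of_int k) \<and>
           (\<forall>i. l \<le> i \<and> i < m \<longrightarrow> (\<exists>k::int. k > 0 \<and> odd k \<and> r i = real_of_int k)) \<and>
           (\<forall>i j. i \<le> j \<and> j < l \<longrightarrow> r j \<le> r i) \<and>
           (\<forall>i j. l \<le> i \<and> i \<le> j \<and> j < m \<longrightarrow> r j \<le> r i) \<and>
           t0 \<cdot>\<^sub>m H = transpose_mat Q * mat_diag n (\<lambda>i. pi * r i) * Q + \<theta> \<cdot>\<^sub>m 1\<^sub>m n \<and>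
           (\<forall>j<m. x j \<ge> 0) \<and>
           (\<forall>j<m. transpose_mat Q $$ (0, j) = x j) \<and>
           (\<forall>j. m \<le> j \<and> j < n \<longrightarrow> transpose_mat Q $$ (0, j) = 0) \<and>
           (\<forall>j<l. transpose_mat Q $$ (1, j) = x j) \<and>
           (\<forall>j. l \<le> j \<and> j < m \<longrightarrow> transpose_mat Q $$ (1, j) = - x j) \<and>
           (\<forall>j. m \<le> j \<and> j < n \<longrightarrow> transpose_mat Q $$ (1, j) = 0)"
proof -
  have n: "0 < n" "1 < n" using assms(2) by auto
  have "t0 \<cdot>\<^sub>m H \<in> carrier_mat n n" "transpose_mat (t0 \<cdot>\<^sub>m H) = t0 \<cdot>\<^sub>m H"
    using assms(1) symmetric_mat_index[OF assms(1,3)] by (auto intro!: eq_matI)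
  then obtain Q0 \<mu> where Q0: "orth_mat n Q0" and diag: "t0 \<cdot>\<^sub>m H = transpose_mat Q0 * mat_diag n \<mu> * Q0"
    using real_symmetric_spectral by blast
  have "cmod (\<Sum>j<n. complex_of_real (Q0 $$ (j,0) * Q0 $$ (j,1)) * exp (\<i> * complex_of_real (\<mu> j))) = 1"
    using assms(4) mat_exp_real_symmetric_index[OF assms(1) Q0 diag n] by simp
  then obtain \<theta> where \<theta>: "\<forall>j<n. transfer_phase_cond (Q0 $$ (j,0)) (Q0 $$ (j,1)) (\<mu> j - \<theta>)"
    using unit_amplitude_transfer_phase[OF orth_mat_col_sum_sq[OF Q0 n(1)] orth_mat_col_sum_sq[OF Q0 n(2)]] by blast
  obtain N :: nat where N: "\<forall>j<n. \<theta> - 2 * pi * N < \<mu> j"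
    using exists_phase_shift_below by blast
  define \<theta>' where "\<theta>' = \<theta> - 2 * pi * N"
  define r0 where "r0 j = (\<mu> j - \<theta>') / pi" for j
  have pi_r0: "pi * r0 j = \<mu> j - \<theta> + 2 * pi * of_int (int N)" for j
    unfolding r0_def \<theta>'_def by simp
  have "0 < r0 j \<and> transfer_phase_cond (Q0 $$ (j,0)) (Q0 $$ (j,1)) (pi * r0 j)" if "j < n" for j
    using N that transfer_phase_cond_shift[OF \<theta>[rule_format, OF that], of "int N"]
    unfolding pi_r0 by (simp add: r0_def \<theta>'_def)
  moreover have "t0 \<cdot>\<^sub>m H = transpose_mat Q0 * mat_diag n (\<lambda>j. pi * r0 j) * Q0 + \<theta>' \<cdot>\<^sub>m 1\<^sub>m n"
    unfolding diag by (subst orth_conj_diag_shift[OF Q0, of _ \<theta>']) (simp add: r0_def)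
  ultimately show ?thesis
    by (rule transfer_normal_form[OF Q0 n(2)])
qed

end
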